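(* Let $f(z)=z+\sum_{n\ge 2}a_nz^n\in\mathcal{BT}_{\mathfrak{B}}$. Then $$|a_2a_3-a_4|\le\frac18.$$ The inequality is sharp, with equality for $f_3(z)=\int_0^z\sqrt{1+\tanh(t^3)}\,dt$.
   Context: $\mathbb{D}=\{z\in\mathbb{C}:|z|<1\}$. $\mathcal{S}$ is the class of univalent analytic functions $f$ on $\mathbb{D}$ normalized by $f(0)=0$, $f'(0)=1$, i.e. $f(z)=z+\sum_{n\ge2}a_nz^n$. For analytic $g,h$ on $\mathbb{D}$, $g\prec h$ means there is an analytic $\omega:\mathbb{D}\to\mathbb{D}$ with $\omega(0)=0$ and $g=h\circ\omega$. Let $\mathfrak{B}(z)=\sqrt{1+\tanh z}$ (principal branch, $\mathfrak{B}(0)=1$). The class $\mathcal{BT}_{\mathfrak{B}}$ is $\{f\in\mathcal{S}: f'(z)\prec \mathfrak{B}(z)\}$. *)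

theory Defs
  imports "HOL-Complex_Analysis.Complex_Analysis"
begin

abbreviation unit_disk :: "complex set" where "unit_disk \<equiv> ball 0 1"

definition class_S :: "(complex \<Rightarrow> complex) set" where
  "class_S = {f. f holomorphic_on unit_disk \<and> inj_on f unit_disk \<and> f 0 = 0 \<and> deriv f 0 = 1}"

definition subordinate :: "(complex \<Rightarrow> complex) \<Rightarrow> (complex \<Rightarrow> complex) \<Rightarrow> bool" where
  "subordinate g h \<longleftrightarrow> (\<exists>\<omega>. \<omega> holomorphic_on unit_disk \<and> \<omega> ` unit_disk \<subseteq> unit_disk \<and>
       \<omega> 0 = 0 \<and> (\<forall>z\<in>unit_disk. g z = h (\<omega> z)))"

definition frakB :: "complex \<Rightarrow> complex" where
  "frakB z = csqrt (1 + tanh z)"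

definition class_BT :: "(complex \<Rightarrow> complex) set" where
  "class_BT = {f \<in> class_S. subordinate (deriv f) frakB}"

definition taylor_coeff :: "(complex \<Rightarrow> complex) \<Rightarrow> nat \<Rightarrow> complex" where
  "taylor_coeff f n = (deriv ^^ n) f 0 / fact n"

definition f3 :: "complex \<Rightarrow> complex" where
  "f3 z = contour_integral (linepath 0 z) (\<lambda>t. csqrt (1 + tanh (t ^ 3)))"

end

theory Submission
  imports Defs
begin

text \<open>
  Write \<open>f' = B \<circ> \<omega>\<close> with a Schwarz function \<open>\<omega>\<close>. By the Schwarz lemma \<open>\<omega>(z) = z w(z)\<close> with
  \<open>|w| \<le> 1\<close>, and comparing coefficients with \<open>B(z) = 1 + z/2 - z\<^sup>2/8 - 5 z\<^sup>3/48 + \<dots>\<close> gives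
  \<open>a\<^sub>2 a\<^sub>3 - a\<^sub>4 = -(c\<^sub>2 - 5/6 c\<^sub>0 c\<^sub>1 - c\<^sub>0\<^sup>3/8)/8\<close> for the Taylor coefficients \<open>c\<^sub>k\<close> of \<open>w\<close>.
  One step of the Schur algorithm (compose \<open>w\<close> with a disk automorphism sending \<open>w(0)\<close> to \<open>0\<close>,
  divide by \<open>z\<close> and apply Schwarz-Pick) gives \<open>|c\<^sub>2| \<le> 1 - |c\<^sub>0|\<^sup>2 - |c\<^sub>1|\<^sup>2/(1 + |c\<^sub>0|)\<close>, and an
  explicit sum of squares shows that this bounds the functional by \<open>1\<close>.
  Equality holds for \<open>\<omega>(z) = z\<^sup>3\<close>, i.e. for \<open>f\<^sub>3\<close>, which is univalent since \<open>Re f\<^sub>3' > 0\<close> on the disk.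
\<close>

lemma holomorphic_has_fps_expansion:
  "f holomorphic_on unit_disk \<Longrightarrow> f has_fps_expansion fps_expansion f 0"
  by (rule has_fps_expansion_fps_expansion) auto

lemma fps_expansion_eq_on_unit_disk:
  assumes "f has_fps_expansion F" "g has_fps_expansion G" "\<And>z. z \<in> unit_disk \<Longrightarrow> f z = g z"
  shows "F = G"
proof -
  have "eventually (\<lambda>z. z \<in> unit_disk) (nhds 0)"
    by (intro eventually_nhds_in_open) auto
  then have "eventually (\<lambda>z. f z = g z) (nhds 0)"
    by eventually_elim (use assms(3) in auto)
  then have "g has_fps_expansion F"
    using assms(1) has_fps_expansion_cong[OF _ refl] by blast
  then show ?thesis
    using assms(2) fps_expansion_unique_complex by blast
qed

lemma fps_expansion_constant_on_unit_disk:
  assumes "\<forall>z\<in>unit_disk. w z = w 0"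
  shows "fps_expansion w 0 = fps_const (w 0)"
proof -
  have "eventually (\<lambda>z. z \<in> unit_disk) (nhds 0)"
    by (intro eventually_nhds_in_open) auto
  then have ev: "eventually (\<lambda>z. w 0 = w z) (nhds 0)"
    by eventually_elim (metis assms)
  have "(\<lambda>_. w 0) has_fps_expansion fps_const (w 0)"
    by (intro fps_expansion_intros)
  then have "w has_fps_expansion fps_const (w 0)"
    using has_fps_expansion_cong[OF ev refl] by blast
  then show ?thesis
    by (rule fps_expansion_eqI)
qed

lemma taylor_coeff_eq_fps_nth:
  "f holomorphic_on unit_disk \<Longrightarrow> taylor_coeff f n = fps_expansion f 0 $ n"
  using fps_nth_fps_expansion[OF holomorphic_has_fps_expansion, of f n]
  by (simp add: taylor_coeff_def)

lemma fps_mult_nth_1_2_3: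
  fixes f g :: "'a :: comm_semiring_1 fps"
  shows "(f * g) $ 1 = f $ 0 * g $ 1 + f $ 1 * g $ 0"
    and "(f * g) $ 2 = f $ 0 * g $ 2 + f $ 1 * g $ 1 + f $ 2 * g $ 0"
    and "(f * g) $ 3 = f $ 0 * g $ 3 + f $ 1 * g $ 2 + f $ 2 * g $ 1 + f $ 3 * g $ 0"
  by (simp_all add: fps_mult_nth numeral_3_eq_3 numeral_2_eq_2 add.assoc)

lemma fps_compose_nth_1_2_3:
  fixes B P :: "'a :: comm_ring_1 fps"
  assumes P0: "P $ 0 = 0"
  shows "(B oo P) $ 1 = B $ 1 * P $ 1"
    and "(B oo P) $ 2 = B $ 1 * P $ 2 + B $ 2 * (P $ 1) ^ 2"
    and "(B oo P) $ 3 = B $ 1 * P $ 3 + 2 * B $ 2 * P $ 1 * P $ 2 + B $ 3 * (P $ 1) ^ 3"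
  using P0
  by (simp_all add: fps_compose_nth numeral_3_eq_3 numeral_2_eq_2 fps_mult_nth
      power3_eq_cube power2_eq_square algebra_simps)

section \<open>Holomorphic self-maps of the unit disk\<close>

lemma self_map_fps_const_if_not_strict:
  assumes holo: "w holomorphic_on unit_disk" and bound: "\<forall>z\<in>unit_disk. norm (w z) \<le> 1"
    and not_strict: "\<not> w ` unit_disk \<subseteq> unit_disk"
  shows "fps_expansion w 0 = fps_const (w 0)"
proof -
  obtain z0 where z0: "z0 \<in> unit_disk" "norm (w z0) \<ge> 1"
    using not_strict by (auto simp: image_subset_iff not_less)
  have "norm (w z) \<le> norm (w z0)" if "z \<in> unit_disk" for z
    using bound that z0(2) by (meson order_trans)
  then have "w constant_on unit_disk"
    by (intro maximum_modulus_principle[OF holo open_ball connected_ball open_ball order_refl z0(1)])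
  then obtain c where "\<forall>z\<in>unit_disk. w z = c"
    unfolding constant_on_def by blast
  then have "\<forall>z\<in>unit_disk. w z = w 0"
    by simp
  then show ?thesis
    by (rule fps_expansion_constant_on_unit_disk)
qed

lemma Schwarz_factor_fps:
  assumes holo: "g holomorphic_on unit_disk" and g0: "g 0 = 0" and maps: "g ` unit_disk \<subseteq> unit_disk"
  obtains v where "v holomorphic_on unit_disk" "\<forall>z\<in>unit_disk. norm (v z) \<le> 1"
    "fps_expansion g 0 = fps_X * fps_expansion v 0"
proof -
  obtain v where v: "v holomorphic_on unit_disk" and gv: "\<And>z. norm z < 1 \<Longrightarrow> g z = z * v z"
    and dv: "deriv g 0 = v 0"
    using Schwarz3[OF holo g0] by blast
  have lt1: "norm (g z) < 1" if "norm z < 1" for z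
    using maps that by (simp add: image_subset_iff)
  have "norm (v z) \<le> 1" if "z \<in> unit_disk" for z
  proof (cases "z = 0")
    case True
    have "norm (deriv g 0) \<le> 1"
      using Schwarz_Lemma(2)[OF holo g0 lt1] by (metis norm_zero zero_less_one)
    with True dv show ?thesis by simp
  next
    case False
    have "norm z < 1"
      using that by simp
    note Schwarz_Lemma(1)[OF holo g0 lt1 this]
    then have "norm z * norm (v z) \<le> norm z * 1"
      using gv[of z] that by (simp add: norm_mult)
    with False show ?thesis by simp
  qed
  moreover have "fps_expansion g 0 = fps_X * fps_expansion v 0"
  proof (rule fps_expansion_eq_on_unit_disk)
    show "g has_fps_expansion fps_expansion g 0"
      using holo by (rule holomorphic_has_fps_expansion)
    show "(\<lambda>z. z * v z) has_fps_expansion fps_X * fps_expansion v 0"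
      using v by (intro fps_expansion_intros holomorphic_has_fps_expansion)
  qed (use gv in simp)
  ultimately show ?thesis
    using that v by blast
qed

lemma norm_1_minus_cnj_mult_self:
  fixes a :: complex
  assumes "norm a \<le> 1"
  shows "norm (1 - cnj a * a) = 1 - norm a ^ 2"
proof -
  have "1 - cnj a * a = of_real (1 - norm a ^ 2)"
    by (metis complex_norm_square mult.commute of_real_1 of_real_diff of_real_power)
  moreover have "norm a ^ 2 \<le> 1"
    using assms by (simp add: power_le_one)
  ultimately show ?thesis
    by (simp only: norm_of_real)
qed

lemma self_map_Moebius_coeffs:
  assumes holo: "w holomorphic_on unit_disk" and maps: "w ` unit_disk \<subseteq> unit_disk"
  obtains g where "g holomorphic_on unit_disk" "g 0 = 0" "g ` unit_disk \<subseteq> unit_disk"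
    "fps_expansion w 0 $ 1 = (1 - cnj (w 0) * w 0) * fps_expansion g 0 $ 1"
    "fps_expansion w 0 $ 2 = (1 - cnj (w 0) * w 0) * fps_expansion g 0 $ 2
       - cnj (w 0) * fps_expansion g 0 $ 1 * fps_expansion w 0 $ 1"
proof -
  define a where "a = w 0"
  define W where "W = fps_expansion w 0"
  define g where "g = Moebius_function 0 a \<circ> w"
  define G where "G = fps_expansion g 0"
  have a: "norm a < 1"
    using maps by (simp add: a_def image_subset_iff)
  have g_holo: "g holomorphic_on unit_disk"
    unfolding g_def by (rule holomorphic_on_compose_gen[OF holo Moebius_function_holomorphic[OF a] maps])
  have g_maps: "g ` unit_disk \<subseteq> unit_disk"
    using Moebius_function_norm_lt_1[OF a] maps by (auto simp: g_def)
  have g0: "g 0 = 0"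
    by (simp add: g_def a_def Moebius_function_eq_zero)
  have "G * (1 - fps_const (cnj a) * W) = W - fps_const a"
  proof (rule fps_expansion_eq_on_unit_disk)
    show "(\<lambda>z. g z * (1 - cnj a * w z)) has_fps_expansion G * (1 - fps_const (cnj a) * W)"
      unfolding G_def W_def
      by (intro fps_expansion_intros holomorphic_has_fps_expansion g_holo holo)
    show "(\<lambda>z. w z - a) has_fps_expansion W - fps_const a"
      unfolding W_def by (intro fps_expansion_intros holomorphic_has_fps_expansion holo)
    fix z :: complex
    assume "z \<in> unit_disk"
    then have "norm (cnj a * w z) < 1"
      using norm_mult_less[of "cnj a" 1 "w z" 1] a maps by (simp add: image_subset_iff)
    then have "1 - cnj a * w z \<noteq> 0"
      by auto
    then show "g z * (1 - cnj a * w z) = w z - a"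
      by (simp add: g_def Moebius_function_simple)
  qed
  then have eq: "(G * (1 - fps_const (cnj a) * W)) $ n = (W - fps_const a) $ n" for n
    by simp
  have W0: "W $ 0 = a" and G0: "G $ 0 = 0"
    using fps_nth_fps_expansion[of w W 0] fps_nth_fps_expansion[of g G 0] g0
    by (simp_all add: W_def G_def a_def holomorphic_has_fps_expansion holo g_holo)
  have "W $ 1 = (1 - cnj a * a) * G $ 1"
    using eq[of 1] by (simp add: fps_mult_nth_1_2_3 W0 G0 algebra_simps)
  moreover have "W $ 2 = (1 - cnj a * a) * G $ 2 - cnj a * G $ 1 * W $ 1"
    using eq[of 2] by (simp add: fps_mult_nth_1_2_3 W0 G0 algebra_simps)
  ultimately show ?thesis
    using that g_holo g0 g_maps by (simp add: a_def W_def G_def)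
qed

lemma self_map_coeff1_bound:
  assumes holo: "w holomorphic_on unit_disk" and bound: "\<forall>z\<in>unit_disk. norm (w z) \<le> 1"
  shows "norm (fps_expansion w 0 $ 1) \<le> 1 - norm (w 0) ^ 2"
proof (cases "w ` unit_disk \<subseteq> unit_disk")
  case True
  obtain g where g: "g holomorphic_on unit_disk" "g 0 = 0" "g ` unit_disk \<subseteq> unit_disk"
    and W1: "fps_expansion w 0 $ 1 = (1 - cnj (w 0) * w 0) * fps_expansion g 0 $ 1"
    and "fps_expansion w 0 $ 2 = (1 - cnj (w 0) * w 0) * fps_expansion g 0 $ 2
           - cnj (w 0) * fps_expansion g 0 $ 1 * fps_expansion w 0 $ 1"
    by (rule self_map_Moebius_coeffs[OF holo True])
  have lt1: "\<And>z. norm z < 1 \<Longrightarrow> norm (g z) < 1"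
    using g(3) by (simp add: image_subset_iff)
  have "norm (deriv g 0) \<le> 1"
    using Schwarz_Lemma(2)[OF g(1,2) lt1] by (metis norm_zero zero_less_one)
  then have G1: "norm (fps_expansion g 0 $ 1) \<le> 1"
    using fps_nth_fps_expansion[OF holomorphic_has_fps_expansion[OF g(1)], of 1] by simp
  have w0: "norm (w 0) \<le> 1"
    using bound by simp
  then have "0 \<le> 1 - norm (w 0) ^ 2"
    by (simp add: power_le_one)
  have "norm (fps_expansion w 0 $ 1) = (1 - norm (w 0) ^ 2) * norm (fps_expansion g 0 $ 1)"
    unfolding W1 norm_mult norm_1_minus_cnj_mult_self[OF w0] ..
  also have "\<dots> \<le> 1 - norm (w 0) ^ 2"
    using mult_left_mono[OF G1 \<open>0 \<le> 1 - norm (w 0) ^ 2\<close>] by simp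
  finally show ?thesis .
next
  case False
  then have "fps_expansion w 0 = fps_const (w 0)"
    by (rule self_map_fps_const_if_not_strict[OF holo bound])
  moreover have "norm (w 0) ^ 2 \<le> 1"
    using bound by (simp add: power_le_one)
  ultimately show ?thesis
    by simp
qed

lemma self_map_coeff2_bound:
  assumes holo: "w holomorphic_on unit_disk" and bound: "\<forall>z\<in>unit_disk. norm (w z) \<le> 1"
  shows "norm (fps_expansion w 0 $ 2)
           \<le> 1 - norm (w 0) ^ 2 - norm (fps_expansion w 0 $ 1) ^ 2 / (1 + norm (w 0))"
proof (cases "w ` unit_disk \<subseteq> unit_disk")
  case True
  define W where "W = fps_expansion w 0"
  define r where "r = norm (w 0)"
  obtain g where g: "g holomorphic_on unit_disk" "g 0 = 0" "g ` unit_disk \<subseteq> unit_disk"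
    and W1: "W $ 1 = (1 - cnj (w 0) * w 0) * fps_expansion g 0 $ 1"
    and W2: "W $ 2 = (1 - cnj (w 0) * w 0) * fps_expansion g 0 $ 2
                     - cnj (w 0) * fps_expansion g 0 $ 1 * W $ 1"
    unfolding W_def by (rule self_map_Moebius_coeffs[OF holo True])
  obtain v where v: "v holomorphic_on unit_disk" "\<forall>z\<in>unit_disk. norm (v z) \<le> 1"
    and gv: "fps_expansion g 0 = fps_X * fps_expansion v 0"
    by (rule Schwarz_factor_fps[OF g])
  define s where "s = norm (v 0)"
  have r: "0 \<le> r" "r < 1"
    using True by (auto simp: r_def image_subset_iff)
  have G1: "fps_expansion g 0 $ 1 = v 0"
    using fps_nth_fps_expansion[OF holomorphic_has_fps_expansion[OF v(1)], of 0] by (simp add: gv)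
  have G2: "norm (fps_expansion g 0 $ 2) \<le> 1 - s ^ 2"
    using self_map_coeff1_bound[OF v] by (simp add: gv s_def numeral_2_eq_2)
  have nr: "norm (1 - cnj (w 0) * w 0) = 1 - r ^ 2"
    using r by (simp add: r_def norm_1_minus_cnj_mult_self)
  have y: "norm (W $ 1) = (1 - r ^ 2) * s"
    unfolding W1 G1 norm_mult nr s_def ..
  have "norm (W $ 2) \<le> norm ((1 - cnj (w 0) * w 0) * fps_expansion g 0 $ 2)
                          + norm (cnj (w 0) * fps_expansion g 0 $ 1 * W $ 1)"
    unfolding W2 by (rule norm_triangle_ineq4)
  also have "\<dots> = (1 - r ^ 2) * norm (fps_expansion g 0 $ 2) + r * s * norm (W $ 1)"
    unfolding norm_mult nr G1 complex_mod_cnj r_def s_def ..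
  also have "\<dots> \<le> (1 - r ^ 2) * (1 - s ^ 2) + r * s * ((1 - r ^ 2) * s)"
    unfolding y using r by (intro add_right_mono mult_left_mono G2) (simp add: power_le_one)
  also have "\<dots> = 1 - r ^ 2 - ((1 - r ^ 2) * s) ^ 2 / (1 + r)"
  proof -
    have "1 + r \<noteq> 0"
      using r by simp
    then show ?thesis
      by (simp add: field_simps power2_eq_square)
  qed
  finally show ?thesis
    unfolding W_def[symmetric] r_def[symmetric] y .
next
  case False
  then have "fps_expansion w 0 = fps_const (w 0)"
    by (rule self_map_fps_const_if_not_strict[OF holo bound])
  moreover have "norm (w 0) ^ 2 \<le> 1"
    using bound by (simp add: power_le_one)
  ultimately show ?thesis
    by simp
qed

lemma functional_real_bound:
  fixes r y :: real
  assumes r: "0 \<le> r" "r \<le> 1"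
  shows "1 - r ^ 2 - y ^ 2 / (1 + r) + 5 / 6 * r * y + r ^ 3 / 8 \<le> 1"
proof -
  define D where "D = r ^ 2 + y ^ 2 / (1 + r) - 5 / 6 * r * y - r ^ 3 / 8"
  have pos: "1 + r > 0"
    using r by simp
  have "(1 + r) * D = (y - 5 / 12 * r * (1 + r)) ^ 2 + r ^ 2 * (1 + r) * (119 - 43 * r) / 144"
    using pos unfolding D_def by (simp add: field_simps power2_eq_square power3_eq_cube)
  also have "\<dots> \<ge> 0"
    using r by simp
  finally have "D \<ge> 0"
    using pos by (simp add: zero_le_mult_iff)
  then show ?thesis
    unfolding D_def by simp
qed

lemma self_map_functional_bound:
  assumes holo: "w holomorphic_on unit_disk" and bound: "\<forall>z\<in>unit_disk. norm (w z) \<le> 1"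
  shows "norm (fps_expansion w 0 $ 2 - 5 / 6 * fps_expansion w 0 $ 0 * fps_expansion w 0 $ 1
                - (fps_expansion w 0 $ 0) ^ 3 / 8) \<le> 1"
proof -
  define W where "W = fps_expansion w 0"
  define r where "r = norm (w 0)"
  define y where "y = norm (W $ 1)"
  have W0: "W $ 0 = w 0"
    using fps_nth_fps_expansion[OF holomorphic_has_fps_expansion[OF holo], of 0] by (simp add: W_def)
  have r: "0 \<le> r" "r \<le> 1"
    using bound by (simp_all add: r_def)
  have "norm (W $ 2 - 5 / 6 * W $ 0 * W $ 1 - (W $ 0) ^ 3 / 8)
        \<le> norm (W $ 2) + norm (5 / 6 * W $ 0 * W $ 1) + norm ((W $ 0) ^ 3 / 8)"
    by (rule order_trans[OF norm_triangle_ineq4 add_right_mono[OF norm_triangle_ineq4]])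
  also have "\<dots> = norm (W $ 2) + 5 / 6 * r * y + r ^ 3 / 8"
    by (simp add: norm_mult norm_divide norm_power W0 r_def y_def)
  also have "\<dots> \<le> 1 - r ^ 2 - y ^ 2 / (1 + r) + 5 / 6 * r * y + r ^ 3 / 8"
    using self_map_coeff2_bound[OF holo bound] by (simp add: W_def r_def y_def)
  also have "\<dots> \<le> 1"
    using r by (rule functional_real_bound)
  finally show ?thesis
    unfolding W_def .
qed

section \<open>The function B\<close>

lemma exp_notin_nonpos_Reals:
  fixes z :: complex
  assumes "\<bar>Im z\<bar> < pi"
  shows "exp z \<notin> \<real>\<^sub>\<le>\<^sub>0"
proof
  assume "exp z \<in> \<real>\<^sub>\<le>\<^sub>0"
  then have "Re (exp z) < 0" "Im (exp z) = 0"
    using exp_not_eq_zero[of z] by (auto simp: complex_nonpos_Reals_iff complex_eq_iff)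
  then have "Im (Ln (exp z)) = pi"
    using Im_Ln_eq_pi by simp
  with assms show False by simp
qed

lemma one_plus_tanh_eq:
  fixes w :: complex
  assumes "\<bar>Im w\<bar> < pi / 2"
  shows "1 + exp (- 2 * w) \<noteq> 0" and "cosh w \<noteq> 0"
    and "1 + tanh w = 2 / (1 + exp (- 2 * w))"
proof -
  have "exp (- 2 * w) \<noteq> - 1"
    using exp_notin_nonpos_Reals[of "- 2 * w"] assms by (auto simp: abs_mult)
  then show nz: "1 + exp (- 2 * w) \<noteq> 0"
    by (metis add.commute add_eq_0_iff2)
  have cosh: "cosh w = exp w * (1 + exp (- 2 * w)) / 2"
    by (simp add: cosh_def scaleR_conv_of_real field_simps flip: exp_add)
  show "cosh w \<noteq> 0"
    using nz by (simp add: cosh)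
  then have "1 + tanh w = (cosh w + sinh w) / cosh w"
    by (simp add: tanh_def add_divide_distrib)
  also have "\<dots> = exp w / (exp w * (1 + exp (- 2 * w)) / 2)"
    unfolding cosh_plus_sinh by (simp only: cosh)
  also have "\<dots> = 2 / (1 + exp (- 2 * w))"
    by (simp add: divide_divide_eq_right)
  finally show "1 + tanh w = 2 / (1 + exp (- 2 * w))" .
qed

lemma one_plus_tanh_notin_nonpos_Reals:
  fixes w :: complex
  assumes "\<bar>Im w\<bar> < pi / 2"
  shows "1 + tanh w \<notin> \<real>\<^sub>\<le>\<^sub>0"
proof
  define E where "E = exp (- 2 * w)"
  assume "1 + tanh w \<in> \<real>\<^sub>\<le>\<^sub>0"
  then obtain t where t: "t \<le> 0" "2 / (1 + E) = of_real t"
    using one_plus_tanh_eq(3)[OF assms] by (auto simp: E_def elim!: nonpos_Reals_cases)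
  then have "t \<noteq> 0"
    using one_plus_tanh_eq(1)[OF assms] by (auto simp: E_def)
  with t one_plus_tanh_eq(1)[OF assms] have "E = of_real (2 / t - 1)"
    by (auto simp: E_def field_simps)
  moreover have "2 / t - 1 \<le> 0"
    using t \<open>t \<noteq> 0\<close> by (simp add: divide_nonpos_neg)
  ultimately have "E \<in> \<real>\<^sub>\<le>\<^sub>0"
    by (metis nonpos_Reals_of_real_iff)
  moreover have "\<bar>Im (- 2 * w)\<bar> < pi"
    using assms by (simp add: abs_mult)
  then have "E \<notin> \<real>\<^sub>\<le>\<^sub>0"
    unfolding E_def by (rule exp_notin_nonpos_Reals)
  ultimately show False by contradiction
qed

lemma Re_csqrt_pos:
  assumes "z \<notin> \<real>\<^sub>\<le>\<^sub>0"
  shows "Re (csqrt z) > 0"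
proof (rule ccontr)
  define y where "y = Im (csqrt z)"
  assume "\<not> Re (csqrt z) > 0"
  then have "csqrt z = \<i> * of_real y"
    using Re_csqrt[of z] by (simp add: complex_eq_iff y_def)
  then have "z = of_real (- (y ^ 2))"
    by (metis power2_csqrt power_mult_distrib power2_i of_real_power of_real_minus mult_minus1)
  moreover have "- (y ^ 2) \<le> 0" by simp
  ultimately have "z \<in> \<real>\<^sub>\<le>\<^sub>0"
    by (metis nonpos_Reals_of_real_iff)
  with assms show False ..
qed

lemma norm_lt_one_imp_abs_Im_lt: "norm (w :: complex) < 1 \<Longrightarrow> \<bar>Im w\<bar> < pi / 2"
  using abs_Im_le_cmod[of w] pi_gt3 by linarith

lemma frakB_holomorphic: "frakB holomorphic_on unit_disk"
proof -
  have *: "cosh z \<noteq> 0" "1 + tanh z \<notin> \<real>\<^sub>\<le>\<^sub>0" if "z \<in> unit_disk" for z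
  proof -
    have "\<bar>Im z\<bar> < pi / 2"
      using that by (intro norm_lt_one_imp_abs_Im_lt) simp
    then show "cosh z \<noteq> 0" "1 + tanh z \<notin> \<real>\<^sub>\<le>\<^sub>0"
      by (rule one_plus_tanh_eq(2), rule one_plus_tanh_notin_nonpos_Reals)
  qed
  have "(\<lambda>z. csqrt (1 + tanh z)) analytic_on unit_disk"
    by (intro analytic_intros) (simp_all add: *)
  then show ?thesis
    unfolding frakB_def by (rule analytic_imp_holomorphic)
qed

lemma frakB_0 [simp]: "frakB 0 = 1"
  by (simp add: frakB_def)

lemma Re_frakB_pos: "norm w < 1 \<Longrightarrow> Re (frakB w) > 0"
  unfolding frakB_def
  by (intro Re_csqrt_pos one_plus_tanh_notin_nonpos_Reals norm_lt_one_imp_abs_Im_lt)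

lemma frakB_squared: "\<bar>Im w\<bar> < pi / 2 \<Longrightarrow> frakB w ^ 2 * (1 + exp (- 2 * w)) = 2"
  using one_plus_tanh_eq[of w] by (simp add: frakB_def field_simps)

definition fps_frakB :: "complex fps" where
  "fps_frakB = fps_expansion frakB 0"

lemma frakB_has_fps_expansion: "frakB has_fps_expansion fps_frakB"
  unfolding fps_frakB_def by (rule holomorphic_has_fps_expansion[OF frakB_holomorphic])

lemma fps_frakB_squared: "fps_frakB ^ 2 * (1 + fps_exp (- 2)) = 2"
proof -
  have "eventually (\<lambda>w. w \<in> unit_disk) (nhds 0)"
    by (intro eventually_nhds_in_open) auto
  then have ev: "eventually (\<lambda>w. frakB w ^ 2 * (1 + exp (- 2 * w)) = 2) (nhds 0)"
    by eventually_elim (intro frakB_squared norm_lt_one_imp_abs_Im_lt, simp)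
  have "(\<lambda>w. frakB w ^ 2 * (1 + exp (- 2 * w))) has_fps_expansion fps_frakB ^ 2 * (1 + fps_exp (- 2))"
    by (intro fps_expansion_intros frakB_has_fps_expansion)
  then have "(\<lambda>_. 2) has_fps_expansion fps_frakB ^ 2 * (1 + fps_exp (- 2))"
    using has_fps_expansion_cong[OF ev refl] by blast
  moreover have "(\<lambda>_. 2 :: complex) has_fps_expansion 2"
    by (intro fps_expansion_intros)
  ultimately show ?thesis
    using fps_expansion_unique_complex by blast
qed

lemma fps_frakB_coeffs:
  "fps_frakB $ 0 = 1" "fps_frakB $ 1 = 1 / 2" "fps_frakB $ 2 = - 1 / 8" "fps_frakB $ 3 = - 5 / 48"
proof -
  define B where "B = fps_frakB"
  define C where "C = B * B"
  define E :: "complex fps" where "E = 1 + fps_exp (- 2)"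
  have E: "E $ 0 = 2" "E $ 1 = - 2" "E $ 2 = 2" "E $ 3 = - 4 / 3"
    by (simp_all add: E_def fps_exp_def fact_numeral)
  have CE: "C * E = 2"
    using fps_frakB_squared by (simp add: B_def C_def E_def power2_eq_square)
  have CE_nth: "(C * E) $ n = 0" if "n > 0" for n
    using that unfolding CE by (simp add: fps_numeral_nth)
  have eq: "(C * E) $ 1 = 0" "(C * E) $ 2 = 0" "(C * E) $ 3 = 0"
    by (simp_all only: CE_nth zero_less_numeral zero_less_one)
  have b0: "B $ 0 = 1"
    using fps_nth_fps_expansion[OF frakB_has_fps_expansion, of 0] by (simp add: B_def)
  have C: "C $ 0 = 1" "C $ 1 = 2 * B $ 1" "C $ 2 = 2 * B $ 2 + (B $ 1) ^ 2"
    "C $ 3 = 2 * B $ 3 + 2 * B $ 1 * B $ 2"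
    unfolding C_def fps_mult_nth_1_2_3 by (simp_all add: b0 power2_eq_square)
  have "(C * E) $ 1 = 4 * B $ 1 - 2"
    unfolding fps_mult_nth_1_2_3 C E by (simp add: algebra_simps)
  with eq(1) have b1: "B $ 1 = 1 / 2"
    by (auto simp: field_simps)
  have "(C * E) $ 2 = 4 * B $ 2 + 1 / 2"
    unfolding fps_mult_nth_1_2_3 C E b1 by (simp add: algebra_simps power2_eq_square)
  with eq(2) have b2: "B $ 2 = - 1 / 8"
    by (auto simp: field_simps add_eq_0_iff)
  have "(C * E) $ 3 = 4 * B $ 3 + 5 / 12"
    unfolding fps_mult_nth_1_2_3 C E b1 b2 by (simp add: algebra_simps power2_eq_square)
  with eq(3) have b3: "B $ 3 = - 5 / 48"
    by (auto simp: field_simps add_eq_0_iff)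
  show "fps_frakB $ 0 = 1" "fps_frakB $ 1 = 1 / 2" "fps_frakB $ 2 = - 1 / 8" "fps_frakB $ 3 = - 5 / 48"
    using b0 b1 b2 b3 by (simp_all add: B_def)
qed

section \<open>The coefficient functional on the class BT\<close>

lemma coeff_functional_of_deriv_eq_frakB_compose:
  fixes F \<Omega> :: "complex fps"
  assumes \<Omega>0: "\<Omega> $ 0 = 0" and F: "fps_deriv F = fps_frakB oo \<Omega>"
  shows "F $ 2 * F $ 3 - F $ 4 = - (\<Omega> $ 3 - 5 / 6 * \<Omega> $ 1 * \<Omega> $ 2 - (\<Omega> $ 1) ^ 3 / 8) / 8"
proof -
  have "2 * F $ 2 = (fps_frakB oo \<Omega>) $ 1" "3 * F $ 3 = (fps_frakB oo \<Omega>) $ 2"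
    "4 * F $ 4 = (fps_frakB oo \<Omega>) $ 3"
    using arg_cong[OF F, of "\<lambda>G. fps_nth G 1"] arg_cong[OF F, of "\<lambda>G. fps_nth G 2"]
      arg_cong[OF F, of "\<lambda>G. fps_nth G 3"]
    by (simp_all add: eval_nat_numeral)
  then have "F $ 2 = \<Omega> $ 1 / 4" "F $ 3 = (\<Omega> $ 2 / 2 - (\<Omega> $ 1) ^ 2 / 8) / 3"
    "F $ 4 = (\<Omega> $ 3 / 2 - \<Omega> $ 1 * \<Omega> $ 2 / 4 - 5 / 48 * (\<Omega> $ 1) ^ 3) / 4"
    unfolding fps_compose_nth_1_2_3[OF \<Omega>0] fps_frakB_coeffs
    by (simp_all only: eq_divide_eq mult.commute) simp_all
  then show ?thesis
    by (simp only:) (simp add: field_simps power2_eq_square power3_eq_cube)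
qed

lemma fps_deriv_eq_frakB_compose:
  assumes f: "f holomorphic_on unit_disk" and \<omega>: "\<omega> holomorphic_on unit_disk" "\<omega> 0 = 0"
    and f': "\<forall>z\<in>unit_disk. deriv f z = frakB (\<omega> z)"
  shows "fps_deriv (fps_expansion f 0) = fps_frakB oo fps_expansion \<omega> 0"
proof (rule fps_expansion_eq_on_unit_disk)
  show "deriv f has_fps_expansion fps_deriv (fps_expansion f 0)"
    by (intro has_fps_expansion_deriv holomorphic_has_fps_expansion f)
  have "fps_expansion \<omega> 0 $ 0 = 0"
    using fps_nth_fps_expansion[OF holomorphic_has_fps_expansion[OF \<omega>(1)], of 0] \<omega>(2) by simp
  then show "(frakB \<circ> \<omega>) has_fps_expansion (fps_frakB oo fps_expansion \<omega> 0)"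
    by (intro has_fps_expansion_compose frakB_has_fps_expansion holomorphic_has_fps_expansion \<omega>(1))
qed (use f' in simp)

lemma class_BT_coeff_functional_bound:
  assumes "f \<in> class_BT"
  shows "cmod (taylor_coeff f 2 * taylor_coeff f 3 - taylor_coeff f 4) \<le> 1 / 8"
proof -
  have f: "f holomorphic_on unit_disk"
    using assms by (simp add: class_BT_def class_S_def)
  obtain \<omega> where
    \<omega>: "\<omega> holomorphic_on unit_disk" "\<omega> 0 = 0" "\<omega> ` unit_disk \<subseteq> unit_disk"
    and f': "\<forall>z\<in>unit_disk. deriv f z = frakB (\<omega> z)"
    using assms by (auto simp: class_BT_def subordinate_def)
  obtain w where w: "w holomorphic_on unit_disk" "\<forall>z\<in>unit_disk. norm (w z) \<le> 1"
    and \<omega>w: "fps_expansion \<omega> 0 = fps_X * fps_expansion w 0"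
    by (rule Schwarz_factor_fps[OF \<omega>])
  define W where "W = fps_expansion w 0"
  have eq: "taylor_coeff f 2 * taylor_coeff f 3 - taylor_coeff f 4
          = - (W $ 2 - 5 / 6 * W $ 0 * W $ 1 - (W $ 0) ^ 3 / 8) / 8"
    using coeff_functional_of_deriv_eq_frakB_compose[OF _ fps_deriv_eq_frakB_compose[OF f \<omega>(1,2) f']]
    unfolding taylor_coeff_eq_fps_nth[OF f] by (simp add: \<omega>w W_def eval_nat_numeral)
  have "norm (W $ 2 - 5 / 6 * W $ 0 * W $ 1 - (W $ 0) ^ 3 / 8) \<le> 1"
    unfolding W_def by (rule self_map_functional_bound[OF w])
  then show ?thesis
    unfolding eq norm_divide norm_minus_cancel by simp
qed

section \<open>The extremal function\<close>

lemma has_field_derivative_linepath_integral: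
  assumes holo: "g holomorphic_on S" and S: "open S" "convex S" and "a \<in> S" "z \<in> S"
  shows "((\<lambda>z. contour_integral (linepath a z) g) has_field_derivative g z) (at z)"
proof -
  have "contour_integral (linepath a b) g + contour_integral (linepath b c) g
          + contour_integral (linepath c a) g = 0" if "b \<in> S" "c \<in> S" for b c
  proof -
    have "convex hull {a, b, c} \<subseteq> S"
      using S(2) \<open>a \<in> S\<close> that by (intro hull_minimal) auto
    then have "(g has_contour_integral 0) (linepath a b +++ linepath b c +++ linepath c a)"
      by (intro Cauchy_theorem_triangle holomorphic_on_subset[OF holo])
    then show ?thesis
      by (rule has_chain_integral_chain_integral3)
  qed
  then have "((\<lambda>z. contour_integral (linepath a z) g) has_field_derivative g z) (at z within S)"
    using holomorphic_on_imp_continuous_on[OF holo] assms(4,5) S(2)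
    by (intro triangle_contour_integrals_convex_primitive) auto
  then show ?thesis
    using at_within_open[OF \<open>z \<in> S\<close> S(1)] by simp
qed

lemma inj_on_if_Re_deriv_pos:
  assumes holo: "f holomorphic_on S" and S: "open S" "convex S"
    and pos: "\<And>z. z \<in> S \<Longrightarrow> Re (deriv f z) > 0"
  shows "inj_on f S"
proof (rule inj_onI, rule ccontr)
  fix z1 z2
  assume z: "z1 \<in> S" "z2 \<in> S" and eq: "f z1 = f z2" and ne: "z1 \<noteq> z2"
  define d where "d = z2 - z1"
  define \<phi> where "\<phi> t = Re (cnj d * f (z1 + of_real t * d))" for t
  have seg: "z1 + of_real t * d \<in> S" if "0 \<le> t" "t \<le> 1" for t
  proof -
    have "z1 + of_real t * d = (1 - t) *\<^sub>R z1 + t *\<^sub>R z2"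
      by (simp add: d_def scaleR_conv_of_real algebra_simps)
    then show ?thesis
      using convexD_alt[OF S(2) z, of t] that by simp
  qed
  have "\<phi> 0 < \<phi> 1"
  proof (rule DERIV_pos_imp_increasing[of 0 1])
    fix t :: real
    assume "0 \<le> t" "t \<le> 1"
    then have zt: "z1 + of_real t * d \<in> S"
      by (rule seg)
    have "((\<lambda>u. z1 + u * d) has_field_derivative d) (at (of_real t))"
      by (auto intro!: derivative_eq_intros)
    from DERIV_chain2[where f = f and g = "\<lambda>u. z1 + u * d",
                      OF holomorphic_derivI[OF holo S(1) zt] this]
    have "((\<lambda>u. cnj d * f (z1 + u * d)) has_field_derivative cnj d * (deriv f (z1 + of_real t * d) * d))
            (at (of_real t))"
      by (rule DERIV_cmult)
    then have "(\<phi> has_real_derivative Re (cnj d * (deriv f (z1 + of_real t * d) * d))) (at t)"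
      unfolding \<phi>_def by (intro has_field_derivative_Re has_vector_derivative_real_field)
    moreover have "cnj d * (deriv f (z1 + of_real t * d) * d) = norm d ^ 2 *\<^sub>R deriv f (z1 + of_real t * d)"
      using complex_norm_square[of d] by (simp add: scaleR_conv_of_real mult.commute mult.left_commute)
    then have "Re (cnj d * (deriv f (z1 + of_real t * d) * d)) = norm d ^ 2 * Re (deriv f (z1 + of_real t * d))"
      by (simp only: scaleR_complex.sel(1))
    moreover have "norm d ^ 2 * Re (deriv f (z1 + of_real t * d)) > 0"
      using ne pos[OF zt] by (simp add: d_def)
    ultimately show "\<exists>y. (\<phi> has_real_derivative y) (at t) \<and> 0 < y"
      by auto
  qed simp
  moreover have "\<phi> 0 = \<phi> 1"
    using eq by (simp add: \<phi>_def d_def)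
  ultimately show False
    by simp
qed

lemma power_in_unit_disk: "z \<in> unit_disk \<Longrightarrow> n > 0 \<Longrightarrow> z ^ n \<in> unit_disk"
  by (simp add: norm_power power_less_one_iff)

lemma frakB_cube_holomorphic: "(\<lambda>t. frakB (t ^ 3)) holomorphic_on unit_disk"
proof -
  have "(\<lambda>t::complex. t ^ 3) ` unit_disk \<subseteq> unit_disk"
    by (auto intro: power_in_unit_disk)
  then have "(frakB \<circ> (\<lambda>t. t ^ 3)) holomorphic_on unit_disk"
    by (intro holomorphic_on_compose_gen[OF _ frakB_holomorphic] holomorphic_intros)
  then show ?thesis
    by (simp add: o_def)
qed

lemma f3_has_field_derivative:
  assumes "z \<in> unit_disk"
  shows "(f3 has_field_derivative frakB (z ^ 3)) (at z)"
proof -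
  have f3_eq: "f3 = (\<lambda>z. contour_integral (linepath 0 z) (\<lambda>t. frakB (t ^ 3)))"
    by (simp add: fun_eq_iff f3_def frakB_def)
  have "(0 :: complex) \<in> unit_disk"
    by simp
  then show ?thesis
    unfolding f3_eq
    by (rule has_field_derivative_linepath_integral[OF frakB_cube_holomorphic open_ball convex_ball _ assms])
qed

lemma f3_holomorphic: "f3 holomorphic_on unit_disk"
  unfolding holomorphic_on_open[OF open_ball] using f3_has_field_derivative by blast

lemma deriv_f3: "z \<in> unit_disk \<Longrightarrow> deriv f3 z = frakB (z ^ 3)"
  by (rule DERIV_imp_deriv[OF f3_has_field_derivative])

lemma f3_in_class_BT: "f3 \<in> class_BT"
proof -
  have "Re (deriv f3 z) > 0" if "z \<in> unit_disk" for z
    using power_in_unit_disk[OF that, of 3] unfolding deriv_f3[OF that] by (intro Re_frakB_pos) simp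
  then have "inj_on f3 unit_disk"
    by (rule inj_on_if_Re_deriv_pos[OF f3_holomorphic open_ball convex_ball])
  moreover have "f3 0 = 0"
    by (simp add: f3_def)
  moreover have "subordinate (deriv f3) frakB"
    unfolding subordinate_def
    by (rule exI[of _ "\<lambda>z. z ^ 3"])
       (auto simp: deriv_f3 intro!: holomorphic_intros power_in_unit_disk)
  ultimately show ?thesis
    using f3_holomorphic deriv_f3[of 0] by (simp add: class_BT_def class_S_def)
qed

lemma f3_coeff_functional: "cmod (taylor_coeff f3 2 * taylor_coeff f3 3 - taylor_coeff f3 4) = 1 / 8"
proof -
  have "fps_expansion (\<lambda>z. z ^ 3) 0 = (fps_X ^ 3 :: complex fps)"
    by (intro fps_expansion_eqI fps_expansion_intros)
  then have "fps_deriv (fps_expansion f3 0) = fps_frakB oo fps_X ^ 3"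
    using fps_deriv_eq_frakB_compose[OF f3_holomorphic, of "\<lambda>z. z ^ 3"]
    by (simp add: deriv_f3 holomorphic_intros)
  from coeff_functional_of_deriv_eq_frakB_compose[OF _ this]
  have "taylor_coeff f3 2 * taylor_coeff f3 3 - taylor_coeff f3 4 = - 1 / 8"
    unfolding taylor_coeff_eq_fps_nth[OF f3_holomorphic] by (simp add: fps_X_power_iff)
  then show ?thesis
    by simp
qed

theorem theorem5p1:
  shows "(\<forall>f\<in>class_BT.
            cmod (taylor_coeff f 2 * taylor_coeff f 3 - taylor_coeff f 4) \<le> 1 / 8)
       \<and> f3 \<in> class_BT
       \<and> cmod (taylor_coeff f3 2 * taylor_coeff f3 3 - taylor_coeff f3 4) = 1 / 8"
  using class_BT_coeff_functional_bound f3_in_class_BT f3_coeff_functional by blast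

end
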